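(* Let $\widetilde{\mathfrak g}$ be an affine Kac–Moody algebra over an algebraically closed field $K$ of characteristic $0$. Then every commutative $2$-cocycle $\varphi$ on $\widetilde{\mathfrak g}$ is trivial, i.e. $\varphi([\widetilde{\mathfrak g},\widetilde{\mathfrak g}],\widetilde{\mathfrak g})=0$.
   Context: A commutative $2$-cocycle on a Lie algebra $L$ over $K$ is a symmetric bilinear form $\varphi:L\times L\to K$ such that $\varphi([x,y],z)+\varphi([z,x],y)+\varphi([y,z],x)=0$ for all $x,y,z\in L$; it is called trivial if it vanishes whenever one argument lies in $[L,L]$. Affine Kac–Moody algebras are taken in the standard realization: for a simple finite-dimensional Lie algebra $\mathfrak g=\bigoplus_{j\in\mathbb Z_n}\mathfrak g_j$ with a $\mathbb Z_n$-grading (coming from a diagram automorphism of order $n$; $n=1$ in the non-twisted case), let $L(\mathfrak g,n)=\bigoplus_{i\in\mathbb Z}\mathfrak g_{i\bmod n}\otimes t^i\subseteq\mathfrak g\otimes K[t,t^{-1}]$, let $\widehat L(\mathfrak g,n)$ be its standard non-split one-dimensional central extension, and the affine Kac–Moody algebra is $\widehat L(\mathfrak g,n)\oplus Kt\frac{d}{dt}$, where $t\frac{d}{dt}$ acts as a derivation of the Laurent polynomials. *)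

theory Defs
  imports Main "HOL-Computational_Algebra.Polynomial"
begin

definition alg_closed :: "'k::field itself \<Rightarrow> bool" where
  "alg_closed _ \<longleftrightarrow> (\<forall>p :: 'k poly. degree p > 0 \<longrightarrow> (\<exists>x. poly p x = 0))"

definition lie_algebra :: "('k::field \<Rightarrow> 'g::ab_group_add \<Rightarrow> 'g) \<Rightarrow> ('g \<Rightarrow> 'g \<Rightarrow> 'g) \<Rightarrow> bool" where
  "lie_algebra scale br \<longleftrightarrow> vector_space scale
     \<and> (\<forall>x y z. br (x + y) z = br x z + br y z)
     \<and> (\<forall>a x y. br (scale a x) y = scale a (br x y))
     \<and> (\<forall>x. br x x = 0)
     \<and> (\<forall>x y z. br x (br y z) + br y (br z x) + br z (br x y) = 0)"

definition finite_dim :: "('k::field \<Rightarrow> 'g::ab_group_add \<Rightarrow> 'g) \<Rightarrow> bool" where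
  "finite_dim scale \<longleftrightarrow> (\<exists>S. finite S \<and> module.span scale S = UNIV)"

definition lie_ideal :: "('k::field \<Rightarrow> 'g::ab_group_add \<Rightarrow> 'g) \<Rightarrow> ('g \<Rightarrow> 'g \<Rightarrow> 'g) \<Rightarrow> 'g set \<Rightarrow> bool" where
  "lie_ideal scale br J \<longleftrightarrow> module.subspace scale J \<and> (\<forall>x y. y \<in> J \<longrightarrow> br x y \<in> J)"

definition lie_subalgebra :: "('k::field \<Rightarrow> 'g::ab_group_add \<Rightarrow> 'g) \<Rightarrow> ('g \<Rightarrow> 'g \<Rightarrow> 'g) \<Rightarrow> 'g set \<Rightarrow> bool" where
  "lie_subalgebra scale br S \<longleftrightarrow> module.subspace scale S \<and> (\<forall>x\<in>S. \<forall>y\<in>S. br x y \<in> S)"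

definition simple_fd_lie_algebra :: "('k::field \<Rightarrow> 'g::ab_group_add \<Rightarrow> 'g) \<Rightarrow> ('g \<Rightarrow> 'g \<Rightarrow> 'g) \<Rightarrow> bool" where
  "simple_fd_lie_algebra scale br \<longleftrightarrow> lie_algebra scale br \<and> finite_dim scale
     \<and> (\<exists>x y. br x y \<noteq> 0)
     \<and> (\<forall>J. lie_ideal scale br J \<longrightarrow> J = {0} \<or> J = UNIV)"

definition chevalley_generators ::
  "('k::field \<Rightarrow> 'g::ab_group_add \<Rightarrow> 'g) \<Rightarrow> ('g \<Rightarrow> 'g \<Rightarrow> 'g) \<Rightarrow> nat set \<Rightarrow> (nat \<Rightarrow> 'g) \<Rightarrow> (nat \<Rightarrow> 'g) \<Rightarrow> bool" where
  "chevalley_generators scale br I e f \<longleftrightarrow>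
     (let h = (\<lambda>i. br (e i) (f i)) in
       finite I \<and> I \<noteq> {}
     \<and> (\<forall>S. lie_subalgebra scale br S \<and> e ` I \<union> f ` I \<subseteq> S \<longrightarrow> S = UNIV)
     \<and> inj_on h I \<and> \<not> module.dependent scale (h ` I)
     \<and> (\<forall>i\<in>I. \<forall>j\<in>I. i \<noteq> j \<longrightarrow> br (e i) (f j) = 0)
     \<and> (\<forall>i\<in>I. \<forall>j\<in>I. br (h i) (h j) = 0)
     \<and> (\<exists>A :: nat \<Rightarrow> nat \<Rightarrow> int. \<forall>i\<in>I. \<forall>j\<in>I.
           A i i = 2
         \<and> (i \<noteq> j \<longrightarrow> A i j \<le> 0 \<and> (A i j = 0 \<longleftrightarrow> A j i = 0))
         \<and> br (h i) (e j) = scale (of_int (A i j)) (e j)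
         \<and> br (h i) (f j) = scale (- of_int (A i j)) (f j)))"

definition lie_automorphism :: "('k::field \<Rightarrow> 'g::ab_group_add \<Rightarrow> 'g) \<Rightarrow> ('g \<Rightarrow> 'g \<Rightarrow> 'g) \<Rightarrow> ('g \<Rightarrow> 'g) \<Rightarrow> bool" where
  "lie_automorphism scale br \<sigma> \<longleftrightarrow> bij \<sigma>
     \<and> (\<forall>x y. \<sigma> (x + y) = \<sigma> x + \<sigma> y) \<and> (\<forall>a x. \<sigma> (scale a x) = scale a (\<sigma> x))
     \<and> (\<forall>x y. \<sigma> (br x y) = br (\<sigma> x) (\<sigma> y))"

definition diagram_automorphism :: "('k::field \<Rightarrow> 'g::ab_group_add \<Rightarrow> 'g) \<Rightarrow> ('g \<Rightarrow> 'g \<Rightarrow> 'g) \<Rightarrow> ('g \<Rightarrow> 'g) \<Rightarrow> nat \<Rightarrow> bool" where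
  "diagram_automorphism scale br \<sigma> n \<longleftrightarrow> lie_automorphism scale br \<sigma>
     \<and> n > 0 \<and> \<sigma> ^^ n = id \<and> (\<forall>k. 0 < k \<and> k < n \<longrightarrow> \<sigma> ^^ k \<noteq> id)
     \<and> (\<exists>I e f \<pi>. chevalley_generators scale br I e f \<and> bij_betw \<pi> I I
          \<and> (\<forall>i\<in>I. \<sigma> (e i) = e (\<pi> i) \<and> \<sigma> (f i) = f (\<pi> i)))"

definition primitive_root :: "'k::field \<Rightarrow> nat \<Rightarrow> bool" where
  "primitive_root \<epsilon> n \<longleftrightarrow> n > 0 \<and> \<epsilon> ^ n = 1 \<and> (\<forall>k. 0 < k \<and> k < n \<longrightarrow> \<epsilon> ^ k \<noteq> 1)"

text \<open>Nondegenerate symmetric invariant bilinear form on g (for simple g: a nonzero multiple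
  of the Killing form); it defines the standard central extension.\<close>
definition invariant_form :: "('k::field \<Rightarrow> 'g::ab_group_add \<Rightarrow> 'g) \<Rightarrow> ('g \<Rightarrow> 'g \<Rightarrow> 'g) \<Rightarrow> ('g \<Rightarrow> 'g \<Rightarrow> 'k) \<Rightarrow> bool" where
  "invariant_form scale br B \<longleftrightarrow>
       (\<forall>x y z. B (x + y) z = B x z + B y z) \<and> (\<forall>a x y. B (scale a x) y = a * B x y)
     \<and> (\<forall>x y. B x y = B y x)
     \<and> (\<forall>x y z. B (br x y) z = B x (br y z))
     \<and> (\<forall>x. (\<forall>y. B x y = 0) \<longrightarrow> x = 0)"

definition grade :: "('k::field \<Rightarrow> 'g::ab_group_add \<Rightarrow> 'g) \<Rightarrow> ('g \<Rightarrow> 'g) \<Rightarrow> nat \<Rightarrow> 'k \<Rightarrow> int \<Rightarrow> 'g set" where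
  "grade scale \<sigma> n \<epsilon> j = {x. \<sigma> x = scale (\<epsilon> ^ nat (j mod int n)) x}"

text \<open>The affine Kac-Moody algebra: an element (a, c, d) stands for
  sum_i a_i (x) t^i + c K + d (t d/dt), with a_i in g_(i mod n), finitely many nonzero.\<close>
type_synonym ('g, 'k) aff = "(int \<Rightarrow> 'g) \<times> 'k \<times> 'k"

definition aff_carrier :: "('k::field \<Rightarrow> 'g::ab_group_add \<Rightarrow> 'g) \<Rightarrow> ('g \<Rightarrow> 'g) \<Rightarrow> nat \<Rightarrow> 'k \<Rightarrow> ('g, 'k) aff set" where
  "aff_carrier scale \<sigma> n \<epsilon> =
     {(a, c, d). finite {i. a i \<noteq> 0} \<and> (\<forall>i. a i \<in> grade scale \<sigma> n \<epsilon> i)}"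

definition aff_add :: "('g::ab_group_add, 'k::field) aff \<Rightarrow> ('g, 'k) aff \<Rightarrow> ('g, 'k) aff" where
  "aff_add x y = (case x of (a, c, d) \<Rightarrow> case y of (b, c', d') \<Rightarrow>
     ((\<lambda>i. a i + b i), c + c', d + d'))"

definition aff_scale :: "('k::field \<Rightarrow> 'g::ab_group_add \<Rightarrow> 'g) \<Rightarrow> 'k \<Rightarrow> ('g, 'k) aff \<Rightarrow> ('g, 'k) aff" where
  "aff_scale scale r x = (case x of (a, c, d) \<Rightarrow> ((\<lambda>i. scale r (a i)), r * c, r * d))"

text \<open>[x t^i, y t^j] = [x,y] t^(i+j) + i delta_(i+j,0) B(x,y) K,
  [t d/dt, x t^i] = i x t^i, K central.\<close>
definition aff_bracket :: "('k::field \<Rightarrow> 'g::ab_group_add \<Rightarrow> 'g) \<Rightarrow> ('g \<Rightarrow> 'g \<Rightarrow> 'g) \<Rightarrow> ('g \<Rightarrow> 'g \<Rightarrow> 'k)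
     \<Rightarrow> ('g, 'k) aff \<Rightarrow> ('g, 'k) aff \<Rightarrow> ('g, 'k) aff" where
  "aff_bracket scale br B x y = (case x of (a, c, d) \<Rightarrow> case y of (b, c', d') \<Rightarrow>
     ((\<lambda>k. (\<Sum>i\<in>{i. a i \<noteq> 0}. br (a i) (b (k - i)))
            + scale (d * of_int k) (b k) - scale (d' * of_int k) (a k)),
      (\<Sum>i\<in>{i. a i \<noteq> 0}. of_int i * B (a i) (b (- i))),
      0))"

definition comm_2_cocycle :: "'a set \<Rightarrow> ('a \<Rightarrow> 'a \<Rightarrow> 'a) \<Rightarrow> ('k::field \<Rightarrow> 'a \<Rightarrow> 'a)
     \<Rightarrow> ('a \<Rightarrow> 'a \<Rightarrow> 'a) \<Rightarrow> ('a \<Rightarrow> 'a \<Rightarrow> 'k) \<Rightarrow> bool" where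
  "comm_2_cocycle L add sc br \<phi> \<longleftrightarrow>
       (\<forall>x\<in>L. \<forall>y\<in>L. \<forall>z\<in>L. \<phi> (add x y) z = \<phi> x z + \<phi> y z)
     \<and> (\<forall>r. \<forall>x\<in>L. \<forall>y\<in>L. \<phi> (sc r x) y = r * \<phi> x y)
     \<and> (\<forall>x\<in>L. \<forall>y\<in>L. \<phi> x y = \<phi> y x)
     \<and> (\<forall>x\<in>L. \<forall>y\<in>L. \<forall>z\<in>L. \<phi> (br x y) z + \<phi> (br z x) y + \<phi> (br y z) x = 0)"

end

theory Submission
  imports Defs
begin

text \<open>Write \<open>x t^i\<close> for the homogeneous loop elements, \<open>K\<close> for the centre, \<open>d = t d/dt\<close> and
  \<open>\<kappa> = \<phi>(K, d)\<close>. The cocycle identity with \<open>d\<close> as third argument gives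
  \<open>\<phi>([x t^a, y t^b], d) = (b - a) \<phi>(x t^a, y t^b)\<close>, and with \<open>K\<close> it gives \<open>\<phi>(K, [L, L]) = 0\<close>.
  For three homogeneous elements it then becomes a relation between \<open>\<phi>([[x, y], z] t^s, d)\<close>
  and \<open>\<kappa> B([x, y], z)\<close> which persists when the degrees are shifted by multiples of \<open>n\<close>, the
  grading being \<open>n\<close>-periodic; as it is quadratic in the shift, both quantities vanish.
  A simple Lie algebra is perfect, so its graded pieces are spanned by (double) brackets of
  homogeneous elements; hence \<open>\<phi>(x t^s, d) = 0\<close> always, and \<open>\<kappa> = 0\<close> as soon as \<open>B\<close> pairs
  \<open>\<gg>\<^sub>i\<close> and \<open>\<gg>\<^sub>-\<^sub>i\<close> nontrivially. From this \<open>\<phi>\<close> vanishes on all pairs of loop elements, and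
  \<open>\<phi>([X, Y], Z)\<close> reduces to the central component of \<open>[X, Y]\<close> times \<open>\<phi>(K, Z)\<close>, which is zero
  because a nonzero central component forces \<open>\<kappa> = 0\<close> and \<open>\<phi>(K, K) = 0\<close>.\<close>

lemma sum_roots_of_unity:
  fixes w :: "'a::field"
  assumes "w ^ n = 1"
  shows "(\<Sum>j<n. w ^ j) = (if w = 1 then of_nat n else 0)"
proof (cases "w = 1")
  case False
  then have "(\<Sum>j<n. w ^ j) = (1 - w ^ n) / (1 - w)" by (simp only: sum_gp_strict if_False)
  with assms False show ?thesis by simp
qed simp

lemma sum_closed:
  assumes "P 0" and "\<And>a b. P a \<Longrightarrow> P b \<Longrightarrow> P (a + b)" and "\<And>i. i \<in> S \<Longrightarrow> P (f i)"
  shows "P (sum f S)"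
  using assms(3) by (induction S rule: infinite_finite_induct) (simp_all add: assms(1,2))

lemma weighted_cyclic_sum_eq_0:
  fixes A B C X Y Z G\<^sub>1 G\<^sub>2 G\<^sub>3 :: "'a::comm_ring"
  assumes "A + B + C = 0" "Z * A = G\<^sub>1" "Y * B = G\<^sub>2" "X * C = G\<^sub>3"
  shows "Y * X * G\<^sub>1 + Z * X * G\<^sub>2 + Z * Y * G\<^sub>3 = 0"
proof -
  have "Y * X * (Z * A) + Z * X * (Y * B) + Z * Y * (X * C) = Z * Y * X * (A + B + C)"
    by (simp add: algebra_simps)
  with assms show ?thesis by simp
qed

text \<open>The left-hand side of the hypothesis is quadratic in \<open>k\<close>, with second difference
  \<open>-8 N\<^sup>2 (G\<^sub>1 - (l - p - q) e)\<close>.\<close>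

lemma quadratic_family_eq_0_imp:
  fixes G\<^sub>1 F\<^sub>2 F\<^sub>3 e :: "'a::field_char_0" and p q l N :: int
  assumes N: "N \<noteq> 0"
    and E: "\<And>k. of_int ((q - N*k) - l - (p + N*k)) * of_int ((p + N*k) - (q - N*k) - l) * G\<^sub>1
       + of_int (l - (p + N*k) - (q - N*k)) * of_int ((p + N*k) - (q - N*k) - l) * (F\<^sub>2 + e * of_int (l + (p + N*k)))
       + of_int (l - (p + N*k) - (q - N*k)) * of_int ((q - N*k) - l - (p + N*k)) * (F\<^sub>3 + e * of_int ((q - N*k) + l)) = 0"
  shows "G\<^sub>1 = of_int (l - p - q) * e"
proof -
  let ?E = "\<lambda>k::int. of_int ((q - N*k) - l - (p + N*k)) * of_int ((p + N*k) - (q - N*k) - l) * G\<^sub>1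
       + of_int (l - (p + N*k) - (q - N*k)) * of_int ((p + N*k) - (q - N*k) - l) * (F\<^sub>2 + e * of_int (l + (p + N*k)))
       + of_int (l - (p + N*k) - (q - N*k)) * of_int ((q - N*k) - l - (p + N*k)) * (F\<^sub>3 + e * of_int ((q - N*k) + l)) :: 'a"
  have "?E 1 + ?E (-1) - 2 * ?E 0 = - 8 * (of_int N)\<^sup>2 * (G\<^sub>1 - of_int (l - p - q) * e)"
    by (simp add: algebra_simps power2_eq_square)
  moreover have "?E 1 + ?E (-1) - 2 * ?E 0 = 0" by (simp only: E) simp
  ultimately show ?thesis using N by simp
qed

lemma exists_congruent_avoiding:
  fixes N p a b :: int
  assumes "N > 0"
  shows "\<exists>p'. p' mod N = p mod N \<and> p' \<noteq> a \<and> p' \<noteq> b"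
proof -
  have "\<exists>j\<in>{0, 1, 2}. p + j * N \<noteq> a \<and> p + j * N \<noteq> b"
    using assms by auto
  then obtain j where "p + j * N \<noteq> a \<and> p + j * N \<noteq> b" ..
  then show ?thesis by (intro exI[of _ "p + j * N"]) simp
qed

section \<open>Simple Lie algebras graded by a finite-order automorphism\<close>

locale twisted_loop = V: vector_space scale
  for scale :: "'k::field_char_0 \<Rightarrow> 'g::ab_group_add \<Rightarrow> 'g" +
  fixes br :: "'g \<Rightarrow> 'g \<Rightarrow> 'g" and \<sigma> :: "'g \<Rightarrow> 'g" and n :: nat and \<epsilon> :: 'k
    and B :: "'g \<Rightarrow> 'g \<Rightarrow> 'k"
  assumes br_add: "br (x + y) z = br x z + br y z"
    and br_scale: "br (scale a x) y = scale a (br x y)"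
    and simple: "\<And>J. lie_ideal scale br J \<Longrightarrow> J = {0} \<or> J = UNIV"
    and nonabelian: "\<exists>x y. br x y \<noteq> 0"
    and \<sigma>_add: "\<sigma> (x + y) = \<sigma> x + \<sigma> y"
    and \<sigma>_scale: "\<sigma> (scale a x) = scale a (\<sigma> x)"
    and \<sigma>_br: "\<sigma> (br x y) = br (\<sigma> x) (\<sigma> y)"
    and n_pos: "n > 0" and \<sigma>_pow_n: "\<sigma> ^^ n = id"
    and \<epsilon>_pow_n: "\<epsilon> ^ n = 1" and \<epsilon>_primitive: "\<And>k. 0 < k \<Longrightarrow> k < n \<Longrightarrow> \<epsilon> ^ k \<noteq> 1"
    and B_add: "B (x + y) z = B x z + B y z" and B_scale: "B (scale a x) y = a * B x y"
    and B_sym: "B x y = B y x" and B_invariant: "B (br x y) z = B x (br y z)"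
    and B_nondegenerate: "\<And>x. (\<forall>y. B x y = 0) \<Longrightarrow> x = 0"
begin

lemma B_add_right: "B x (y + z) = B x y + B x z"
  by (simp only: B_sym[of x] B_add)

lemma B_scale_right: "B x (scale a y) = a * B x y"
  by (simp only: B_sym[of x] B_scale)

lemma B_zero [simp]: "B 0 y = 0" "B y 0 = 0"
proof -
  show "B 0 y = 0" using B_add[of 0 0 y] by simp
  then show "B y 0 = 0" by (simp add: B_sym)
qed

lemma B_diff: "B (x - y) z = B x z - B y z"
  using B_add[of "x - y" y z] by simp

text \<open>The bracket is only assumed linear in its first argument; linearity in the second
  follows because it is so after pairing with the nondegenerate invariant form.\<close>

lemma br_add_right: "br x (y + z) = br x y + br x z"
proof -
  have "B (br x (y + z) - (br x y + br x z)) w = 0" for w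
    by (simp add: B_diff B_add B_invariant br_add B_add_right)
  then show ?thesis using B_nondegenerate by fastforce
qed

lemma br_scale_right: "br x (scale a y) = scale a (br x y)"
proof -
  have "B (br x (scale a y) - scale a (br x y)) w = 0" for w
    by (simp add: B_diff B_scale B_invariant br_scale B_scale_right)
  then show ?thesis using B_nondegenerate by fastforce
qed

lemma br_zero [simp]: "br 0 x = 0" "br x 0 = 0"
  using br_add[of 0 0 x] br_add_right[of x 0 0] by simp_all

lemma br_sum: "br (sum f S) y = (\<Sum>i\<in>S. br (f i) y)" "br y (sum f S) = (\<Sum>i\<in>S. br y (f i))"
  by (induction S rule: infinite_finite_induct) (auto simp: br_add br_add_right)

lemma B_br_rotate: "B (br z x) y = B (br x y) z" "B (br y z) x = B (br x y) z"
  using B_invariant B_sym by metis+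

lemma lie_perfect: "V.span (range (case_prod br)) = UNIV"
proof -
  let ?J = "V.span (range (case_prod br))"
  have "br x y \<in> ?J" if "y \<in> ?J" for x y
    using that
  proof (induction y rule: V.span_induct_alt)
    case (step c g y)
    then obtain a b where "g = br a b" by auto
    moreover have "br x (br a b) \<in> ?J" by (rule V.span_base) auto
    ultimately show ?case
      using step by (simp add: br_add_right br_scale_right V.span_add V.span_scale)
  qed (simp add: V.span_zero)
  then have "lie_ideal scale br ?J" by (simp add: lie_ideal_def)
  then have "?J = {0} \<or> ?J = UNIV" by (rule simple)
  moreover obtain a b where "br a b \<noteq> 0" using nonabelian by auto
  moreover have "br a b \<in> ?J" by (rule V.span_base) auto
  ultimately show ?thesis by auto
qed

definition eig :: "int \<Rightarrow> 'k" where "eig i = \<epsilon> ^ nat (i mod int n)"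

abbreviation gr :: "int \<Rightarrow> 'g set" where "gr \<equiv> grade scale \<sigma> n \<epsilon>"

lemma mem_gr_iff: "x \<in> gr i \<longleftrightarrow> \<sigma> x = scale (eig i) x"
  by (simp add: grade_def eig_def)

lemma \<epsilon>_pow_mod: "\<epsilon> ^ k = \<epsilon> ^ (k mod n)"
proof -
  have "\<epsilon> ^ k = \<epsilon> ^ (n * (k div n) + k mod n)" by (simp only: mult_div_mod_eq)
  also have "\<dots> = (\<epsilon> ^ n) ^ (k div n) * \<epsilon> ^ (k mod n)" by (simp only: power_add power_mult)
  then show ?thesis by (simp add: \<epsilon>_pow_n)
qed

lemma eig_eq_pow:
  assumes "int k mod int n = i mod int n"
  shows "eig i = \<epsilon> ^ k"
proof -
  have "nat (i mod int n) = k mod n" using assms by (simp add: zmod_int[symmetric])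
  then show ?thesis by (simp add: eig_def \<epsilon>_pow_mod[of k])
qed

lemma eig_add: "eig (i + j) = eig i * eig j"
proof -
  define a where "a = nat (i mod int n)"
  define b where "b = nat (j mod int n)"
  have "int (a + b) mod int n = (i + j) mod int n"
    using n_pos by (simp add: a_def b_def mod_add_eq)
  then have "eig (i + j) = \<epsilon> ^ (a + b)" by (rule eig_eq_pow)
  then show ?thesis by (simp add: power_add eig_def a_def b_def)
qed

lemma eig_0 [simp]: "eig 0 = 1"
  by (simp add: eig_def)

lemma eig_mult: "eig (i * int j) = eig i ^ j"
  by (induction j) (simp_all add: algebra_simps eig_add)

lemma eig_eq_1_iff: "eig i = 1 \<longleftrightarrow> i mod int n = 0"
proof
  assume "eig i = 1"
  moreover have "nat (i mod int n) < n" using n_pos by (simp add: nat_less_iff)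
  ultimately have "nat (i mod int n) = 0"
    using \<epsilon>_primitive[of "nat (i mod int n)"] unfolding eig_def by (meson neq0_conv)
  then show "i mod int n = 0" using n_pos pos_mod_sign[of "int n" i] by linarith
qed (simp add: eig_def)

lemma eig_pow_n: "eig i ^ n = 1"
  unfolding eig_mult[symmetric] eig_eq_1_iff by simp

lemma gr_cong_mod: "i mod int n = j mod int n \<Longrightarrow> gr i = gr j"
  by (simp add: grade_def)

lemma gr_shift: "gr (i + int n * k) = gr i"
  by (rule gr_cong_mod) simp

lemma \<sigma>_zero [simp]: "\<sigma> 0 = 0"
  using \<sigma>_add[of 0 0] by simp

lemma \<sigma>_sum: "\<sigma> (sum f S) = (\<Sum>i\<in>S. \<sigma> (f i))"
  by (induction S rule: infinite_finite_induct) (simp_all add: \<sigma>_add)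

lemma \<sigma>_pow_zero [simp]: "(\<sigma> ^^ j) 0 = 0"
  by (induction j) simp_all

lemma \<sigma>_pow_add: "(\<sigma> ^^ j) (x + y) = (\<sigma> ^^ j) x + (\<sigma> ^^ j) y"
  by (induction j) (simp_all add: \<sigma>_add)

lemma \<sigma>_pow_scale: "(\<sigma> ^^ j) (scale a x) = scale a ((\<sigma> ^^ j) x)"
  by (induction j) (simp_all add: \<sigma>_scale)

lemma gr_zero [simp]: "0 \<in> gr i"
  by (simp add: mem_gr_iff)

lemma gr_add: "x \<in> gr i \<Longrightarrow> y \<in> gr i \<Longrightarrow> x + y \<in> gr i"
  by (simp add: mem_gr_iff \<sigma>_add V.scale_right_distrib)

lemma gr_scale: "x \<in> gr i \<Longrightarrow> scale a x \<in> gr i"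
  by (simp add: mem_gr_iff \<sigma>_scale V.scale_left_commute)

lemma gr_diff: "x \<in> gr i \<Longrightarrow> y \<in> gr i \<Longrightarrow> x - y \<in> gr i"
  using gr_add[of x i "scale (- 1) y"] gr_scale[of y i "- 1"] by simp

lemma gr_sum: "(\<And>j. j \<in> S \<Longrightarrow> f j \<in> gr i) \<Longrightarrow> sum f S \<in> gr i"
  by (induction S rule: infinite_finite_induct) (simp_all add: gr_add)

lemma gr_br: "x \<in> gr i \<Longrightarrow> y \<in> gr j \<Longrightarrow> br x y \<in> gr (i + j)"
  by (simp add: mem_gr_iff \<sigma>_br br_scale br_scale_right eig_add V.scale_scale mult.commute)

lemma \<sigma>_pow_gr: "y \<in> gr t \<Longrightarrow> (\<sigma> ^^ j) y = scale (eig t ^ j) y"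
  by (induction j) (simp_all add: mem_gr_iff \<sigma>_scale V.scale_scale mult.commute)

definition gr_proj :: "int \<Rightarrow> 'g \<Rightarrow> 'g" where
  "gr_proj r x = scale (1 / of_nat n) (\<Sum>j<n. scale (eig (- r * int j)) ((\<sigma> ^^ j) x))"

lemma gr_proj_add: "gr_proj r (x + y) = gr_proj r x + gr_proj r y"
  by (simp add: gr_proj_def \<sigma>_pow_add V.scale_right_distrib sum.distrib)

lemma gr_proj_scale: "gr_proj r (scale a x) = scale a (gr_proj r x)"
  by (simp add: gr_proj_def \<sigma>_pow_scale V.scale_sum_right V.scale_scale mult.commute)

lemma gr_proj_zero [simp]: "gr_proj r 0 = 0"
  using gr_proj_add[of r 0 0] by simp

lemma gr_proj_sum: "gr_proj r (sum f S) = (\<Sum>i\<in>S. gr_proj r (f i))"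
  by (induction S rule: infinite_finite_induct) (simp_all add: gr_proj_add)

text \<open>The sum defining the projection is over a full period of \<open>\<sigma>\<close>, so applying \<open>\<sigma>\<close>
  only shifts the summation index.\<close>

lemma gr_proj_in_gr: "gr_proj r x \<in> gr r"
proof -
  define f where "f j = scale (eig (- r * int j)) ((\<sigma> ^^ j) x)" for j
  have "f n = f 0"
    using eig_eq_1_iff[of "- r * int n"] by (simp add: f_def \<sigma>_pow_n)
  then have shift: "(\<Sum>j<n. f (Suc j)) = (\<Sum>j<n. f j)"
    using sum.lessThan_Suc_shift[of f n] by (simp add: add.commute)
  have step: "\<sigma> (f j) = scale (eig r) (f (Suc j))" for j
  proof -
    have "eig r * eig (- r * int (Suc j)) = eig (- r * int j)"
      by (simp add: eig_add[symmetric] algebra_simps)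
    then show ?thesis by (simp add: f_def \<sigma>_scale V.scale_scale)
  qed
  have "\<sigma> (gr_proj r x) = scale (1 / of_nat n) (\<Sum>j<n. \<sigma> (f j))"
    by (simp add: gr_proj_def \<sigma>_scale \<sigma>_sum f_def)
  also have "\<dots> = scale (1 / of_nat n) (scale (eig r) (\<Sum>j<n. f (Suc j)))"
    by (simp only: step V.scale_sum_right)
  also have "\<dots> = scale (1 / of_nat n) (scale (eig r) (\<Sum>j<n. f j))"
    by (simp only: shift)
  also have "\<dots> = scale (eig r) (gr_proj r x)"
    by (simp add: gr_proj_def f_def V.scale_left_commute)
  finally show ?thesis by (simp add: mem_gr_iff)
qed

lemma gr_proj_on_gr:
  assumes "y \<in> gr t"
  shows "gr_proj r y = (if (t - r) mod int n = 0 then y else 0)"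
proof -
  have "eig (- r * int j) * eig t ^ j = eig (t - r) ^ j" for j
    by (simp add: eig_add[symmetric] eig_mult[symmetric] algebra_simps)
  then have "gr_proj r y = scale (1 / of_nat n) (\<Sum>j<n. scale (eig (t - r) ^ j) y)"
    by (simp add: gr_proj_def \<sigma>_pow_gr[OF assms] V.scale_scale)
  also have "\<dots> = scale (1 / of_nat n * (\<Sum>j<n. eig (t - r) ^ j)) y"
    by (simp only: V.scale_sum_left[symmetric] V.scale_scale)
  finally have "gr_proj r y = \<dots>" .
  then show ?thesis
    using n_pos by (simp add: sum_roots_of_unity[OF eig_pow_n] eig_eq_1_iff)
qed

lemma gr_proj_self: "y \<in> gr t \<Longrightarrow> gr_proj t y = y"
  by (simp add: gr_proj_on_gr)

lemma sum_gr_proj: "(\<Sum>r<n. gr_proj (int r) x) = x"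
proof -
  have geometric: "(\<Sum>r<n. eig (- int j) ^ r) = (if j = 0 then of_nat n else 0)" if "j < n" for j
  proof -
    have "eig (- int j) = 1 \<longleftrightarrow> j = 0"
      using that by (auto simp: eig_eq_1_iff mod_eq_0_iff_dvd dest: nat_dvd_not_less)
    then show ?thesis by (simp add: sum_roots_of_unity[OF eig_pow_n])
  qed
  have "eig (- int r * int j) = eig (- int j) ^ r" for r j
    using eig_mult[of "- int j" r] by (simp add: mult.commute)
  then have "(\<Sum>r<n. gr_proj (int r) x)
      = scale (1 / of_nat n) (\<Sum>r<n. \<Sum>j<n. scale (eig (- int j) ^ r) ((\<sigma> ^^ j) x))"
    by (simp only: gr_proj_def V.scale_sum_right[symmetric])
  also have "\<dots> = scale (1 / of_nat n) (\<Sum>j<n. \<Sum>r<n. scale (eig (- int j) ^ r) ((\<sigma> ^^ j) x))"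
    by (rule arg_cong[where f = "scale _"], rule sum.swap)
  also have "\<dots> = scale (1 / of_nat n) (\<Sum>j<n. scale (\<Sum>r<n. eig (- int j) ^ r) ((\<sigma> ^^ j) x))"
    by (simp only: V.scale_sum_left)
  also have "\<dots> = scale (1 / of_nat n) (\<Sum>j<n. if j = 0 then scale (of_nat n) x else 0)"
    by (intro arg_cong[where f = "scale _"] sum.cong) (simp_all add: geometric)
  also have "\<dots> = x"
    using n_pos by (simp add: sum.delta V.scale_scale)
  finally show ?thesis .
qed

lemma gr_proj_br:
  assumes x: "x \<in> gr p" and y: "y \<in> gr q"
  shows "gr_proj s (br x y) = 0 \<or> y \<in> gr (s - p) \<and> gr_proj s (br x y) = br x y"
proof (cases "(p + q - s) mod int n = 0")
  case True
  have e: "q - (s - p) = p + q - s" by simp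
  have "q mod int n = (s - p) mod int n"
    unfolding mod_eq_dvd_iff e using True by (simp add: mod_eq_0_iff_dvd)
  then have "gr q = gr (s - p)" by (rule gr_cong_mod)
  then show ?thesis
    using gr_proj_on_gr[OF gr_br[OF x y], of s] True y by simp
qed (simp add: gr_proj_on_gr[OF gr_br[OF x y]])

text \<open>Since the Lie algebra is perfect, each graded piece is spanned by brackets of
  homogeneous elements.\<close>

lemma gr_bracket_induct [consumes 1, case_names zero add scale bracket]:
  assumes v: "v \<in> gr s"
    and Q_zero: "Q 0" and Q_add: "\<And>a b. a \<in> gr s \<Longrightarrow> b \<in> gr s \<Longrightarrow> Q a \<Longrightarrow> Q b \<Longrightarrow> Q (a + b)"
    and Q_scale: "\<And>c a. a \<in> gr s \<Longrightarrow> Q a \<Longrightarrow> Q (scale c a)"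
    and Q_bracket: "\<And>p x y. x \<in> gr p \<Longrightarrow> y \<in> gr (s - p) \<Longrightarrow> Q (br x y)"
  shows "Q v"
proof -
  define R where "R v \<longleftrightarrow> v \<in> gr s \<and> Q v" for v
  have R_zero: "R 0" by (simp add: R_def Q_zero)
  have R_add: "R a \<Longrightarrow> R b \<Longrightarrow> R (a + b)" for a b by (simp add: R_def Q_add gr_add)
  have R_scale: "R a \<Longrightarrow> R (scale c a)" for a c by (simp add: R_def Q_scale gr_scale)
  have R_proj_br: "R (gr_proj s (br a b))" for a b
  proof -
    have "gr_proj s (br a b)
        = (\<Sum>q<n. \<Sum>p<n. gr_proj s (br (gr_proj (int p) a) (gr_proj (int q) b)))"
    proof -
      have "br a b = br (\<Sum>p<n. gr_proj (int p) a) (\<Sum>q<n. gr_proj (int q) b)"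
        by (simp only: sum_gr_proj)
      then show ?thesis by (simp add: br_sum gr_proj_sum)
    qed
    moreover have "R (gr_proj s (br (gr_proj p a) (gr_proj q b)))" for p q
      using gr_proj_br[OF gr_proj_in_gr gr_proj_in_gr, of s p a q b]
        Q_bracket[OF gr_proj_in_gr] gr_proj_in_gr R_zero by (auto simp: R_def)
    ultimately show ?thesis by (simp add: sum_closed[where P = R, OF R_zero R_add])
  qed
  have "R (gr_proj s w)" for w
  proof -
    have "w \<in> V.span (range (case_prod br))" by (simp add: lie_perfect)
    then show ?thesis
    proof (induction w rule: V.span_induct_alt)
      case (step c g y)
      then show ?case
        using R_proj_br R_add R_scale by (auto simp: gr_proj_add gr_proj_scale)
    qed (simp add: R_zero)
  qed
  then show ?thesis using gr_proj_self[OF v] by (metis R_def)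
qed

lemma gr_triple_bracket_induct [consumes 1, case_names zero add scale bracket]:
  assumes v: "v \<in> gr s"
    and Q_zero: "Q 0" and Q_add: "\<And>a b. a \<in> gr s \<Longrightarrow> b \<in> gr s \<Longrightarrow> Q a \<Longrightarrow> Q b \<Longrightarrow> Q (a + b)"
    and Q_scale: "\<And>c a. a \<in> gr s \<Longrightarrow> Q a \<Longrightarrow> Q (scale c a)"
    and Q_bracket: "\<And>p q x y z. x \<in> gr p \<Longrightarrow> y \<in> gr q \<Longrightarrow> z \<in> gr (s - p - q) \<Longrightarrow> Q (br (br x y) z)"
  shows "Q v"
  using v
proof (induction rule: gr_bracket_induct)
  case (bracket r w z)
  note z = \<open>z \<in> gr (s - r)\<close>
  from \<open>w \<in> gr r\<close> show ?case
  proof (induction rule: gr_bracket_induct)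
    case (add a b)
    then show ?case using Q_add[of "br a z" "br b z"] gr_br[OF _ z, of _ r] by (simp add: br_add)
  next
    case (scale c a)
    then show ?case using Q_scale[of "br a z"] gr_br[OF _ z, of _ r] by (simp add: br_scale)
  next
    case (bracket p x y)
    moreover have "z \<in> gr (s - p - (r - p))" using z by simp
    ultimately show ?case by (rule Q_bracket)
  qed (simp add: Q_zero)
qed (use Q_zero Q_add Q_scale in auto)

definition omega :: "int \<Rightarrow> int \<Rightarrow> 'g \<Rightarrow> 'g \<Rightarrow> 'k" where
  "omega a b x y = (if a + b = 0 then of_int a * B x y else 0)"

end

section \<open>Commutative cocycles on the affine algebra\<close>

locale affine_cocycle = twisted_loop scale br \<sigma> n \<epsilon> B
  for scale :: "'k::field_char_0 \<Rightarrow> 'g::ab_group_add \<Rightarrow> 'g" and br \<sigma> n \<epsilon> B +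
  fixes \<phi> :: "('g, 'k) aff \<Rightarrow> ('g, 'k) aff \<Rightarrow> 'k"
  assumes cocycle: "comm_2_cocycle (aff_carrier scale \<sigma> n \<epsilon>) aff_add (aff_scale scale) (aff_bracket scale br B) \<phi>"
begin

abbreviation "Aff \<equiv> aff_carrier scale \<sigma> n \<epsilon>"
abbreviation "abr \<equiv> aff_bracket scale br B"
abbreviation "asc \<equiv> aff_scale scale"

definition loop :: "int \<Rightarrow> 'g \<Rightarrow> ('g, 'k) aff" where
  "loop k x = ((\<lambda>i. if i = k then x else 0), 0, 0)"

definition K_elt :: "('g, 'k) aff" where "K_elt = ((\<lambda>_. 0), 1, 0)"
definition d_elt :: "('g, 'k) aff" where "d_elt = ((\<lambda>_. 0), 0, 1)"
definition zero_elt :: "('g, 'k) aff" where "zero_elt = ((\<lambda>_. 0), 0, 0)"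

lemma mem_Aff_iff: "(a, c, d) \<in> Aff \<longleftrightarrow> finite {i. a i \<noteq> 0} \<and> (\<forall>i. a i \<in> gr i)"
  by (simp add: aff_carrier_def)

lemma aff_add_in:
  assumes "x \<in> Aff" "y \<in> Aff"
  shows "aff_add x y \<in> Aff"
proof -
  obtain a c d b c' d' where xy: "x = (a, c, d)" "y = (b, c', d')" by (cases x, cases y) auto
  have "{i. a i + b i \<noteq> 0} \<subseteq> {i. a i \<noteq> 0} \<union> {i. b i \<noteq> 0}" by auto
  then show ?thesis
    using assms by (auto simp: xy aff_add_def mem_Aff_iff gr_add intro: finite_subset)
qed

lemma aff_scale_in:
  assumes "x \<in> Aff"
  shows "asc r x \<in> Aff"
proof -
  obtain a c d where x: "x = (a, c, d)" by (cases x) auto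
  have "{i. scale r (a i) \<noteq> 0} \<subseteq> {i. a i \<noteq> 0}" by auto
  then show ?thesis
    using assms by (auto simp: x aff_scale_def mem_Aff_iff gr_scale intro: finite_subset)
qed

lemma loop_in: "x \<in> gr k \<Longrightarrow> loop k x \<in> Aff"
  unfolding loop_def mem_Aff_iff by (auto intro: finite_subset[of _ "{k}"])

lemma K_elt_in: "K_elt \<in> Aff"
  by (simp add: K_elt_def mem_Aff_iff)

lemma d_elt_in: "d_elt \<in> Aff"
  by (simp add: d_elt_def mem_Aff_iff)

lemma zero_elt_in: "zero_elt \<in> Aff"
  by (simp add: zero_elt_def mem_Aff_iff)

lemma abr_in:
  assumes X: "X \<in> Aff" and Y: "Y \<in> Aff"
  shows "abr X Y \<in> Aff"
proof -
  obtain a c d b c' d' where xy: "X = (a, c, d)" "Y = (b, c', d')" by (cases X, cases Y) auto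
  let ?Sa = "{i. a i \<noteq> 0}" and ?Sb = "{i. b i \<noteq> 0}"
  have fa: "finite ?Sa" and ga: "\<And>i. a i \<in> gr i" and fb: "finite ?Sb" and gb: "\<And>i. b i \<in> gr i"
    using X Y by (auto simp: xy mem_Aff_iff)
  define g where "g k = (\<Sum>i\<in>?Sa. br (a i) (b (k - i)))
    + scale (d * of_int k) (b k) - scale (d' * of_int k) (a k)" for k
  have "abr X Y = (g, (\<Sum>i\<in>?Sa. of_int i * B (a i) (b (- i))), 0)"
    by (simp add: xy aff_bracket_def g_def fun_eq_iff)
  moreover have "g k \<in> gr k" for k
  proof -
    have "br (a i) (b (k - i)) \<in> gr k" for i using gr_br[OF ga gb, of i "k - i"] by simp
    then show ?thesis unfolding g_def by (intro gr_diff gr_add gr_scale gr_sum ga gb)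
  qed
  moreover have "{k. g k \<noteq> 0} \<subseteq> (\<lambda>(i, j). i + j) ` (?Sa \<times> ?Sb) \<union> ?Sa \<union> ?Sb"
  proof
    fix k assume "k \<in> {k. g k \<noteq> 0}"
    moreover have "g k = 0" if "k \<notin> (\<lambda>(i, j). i + j) ` (?Sa \<times> ?Sb) \<union> ?Sa \<union> ?Sb"
    proof -
      have "b (k - i) = 0" if "i \<in> ?Sa" for i
        using that \<open>k \<notin> _\<close> by (force intro: image_eqI[where x = "(i, k - i)"])
      then show ?thesis using that by (simp add: g_def)
    qed
    ultimately show "k \<in> (\<lambda>(i, j). i + j) ` (?Sa \<times> ?Sb) \<union> ?Sa \<union> ?Sb" by blast
  qed
  then have "finite {k. g k \<noteq> 0}" by (rule finite_subset) (simp add: fa fb)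
  ultimately show ?thesis by (simp add: mem_Aff_iff)
qed

lemma loop_zero: "loop k 0 = zero_elt"
  by (simp add: loop_def zero_elt_def)

lemma loop_add: "loop k (x + y) = aff_add (loop k x) (loop k y)"
  by (simp add: loop_def aff_add_def fun_eq_iff)

lemma loop_scale: "loop k (scale r x) = asc r (loop k x)"
  by (simp add: loop_def aff_scale_def fun_eq_iff)

lemma abr_loop_loop:
  "abr (loop a x) (loop b y) = aff_add (loop (a + b) (br x y)) (asc (omega a b x y) K_elt)"
proof -
  have "{i. (if i = a then x else 0) \<noteq> 0} = (if x = 0 then {} else {a})" by auto
  then show ?thesis
    by (simp add: aff_bracket_def loop_def aff_add_def aff_scale_def K_elt_def fun_eq_iff omega_def)
qed

lemma abr_d_loop: "abr d_elt (loop a x) = asc (of_int a) (loop a x)"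
  by (simp add: aff_bracket_def loop_def aff_scale_def d_elt_def fun_eq_iff)

lemma abr_loop_d: "abr (loop a x) d_elt = asc (- of_int a) (loop a x)"
proof -
  have "{i. (if i = a then x else 0) \<noteq> 0} = (if x = 0 then {} else {a})" by auto
  then show ?thesis by (simp add: aff_bracket_def loop_def aff_scale_def d_elt_def fun_eq_iff)
qed

lemma abr_K_left: "abr K_elt z = zero_elt"
  by (cases z) (simp add: aff_bracket_def K_elt_def zero_elt_def fun_eq_iff)

lemma abr_K_right: "abr z K_elt = zero_elt"
  by (cases z) (simp add: aff_bracket_def K_elt_def zero_elt_def fun_eq_iff)

lemma phi_add: "x \<in> Aff \<Longrightarrow> y \<in> Aff \<Longrightarrow> z \<in> Aff \<Longrightarrow> \<phi> (aff_add x y) z = \<phi> x z + \<phi> y z"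
  using cocycle by (simp add: comm_2_cocycle_def)

lemma phi_scale: "x \<in> Aff \<Longrightarrow> y \<in> Aff \<Longrightarrow> \<phi> (asc r x) y = r * \<phi> x y"
  using cocycle by (simp add: comm_2_cocycle_def)

lemma phi_sym: "x \<in> Aff \<Longrightarrow> y \<in> Aff \<Longrightarrow> \<phi> x y = \<phi> y x"
  using cocycle by (simp add: comm_2_cocycle_def)

lemma phi_cyclic:
  "x \<in> Aff \<Longrightarrow> y \<in> Aff \<Longrightarrow> z \<in> Aff \<Longrightarrow> \<phi> (abr x y) z + \<phi> (abr z x) y + \<phi> (abr y z) x = 0"
  using cocycle unfolding comm_2_cocycle_def by blast

lemma phi_add_right: "x \<in> Aff \<Longrightarrow> y \<in> Aff \<Longrightarrow> z \<in> Aff \<Longrightarrow> \<phi> z (aff_add x y) = \<phi> z x + \<phi> z y"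
  using phi_add[of x y z] phi_sym[of z] aff_add_in[of x y] by simp

lemma phi_scale_right: "x \<in> Aff \<Longrightarrow> y \<in> Aff \<Longrightarrow> \<phi> y (asc r x) = r * \<phi> y x"
  using phi_scale[of x y r] phi_sym[of y] aff_scale_in[of x r] by simp

lemma phi_zero_elt [simp]: "z \<in> Aff \<Longrightarrow> \<phi> zero_elt z = 0" "z \<in> Aff \<Longrightarrow> \<phi> z zero_elt = 0"
proof -
  have "aff_add zero_elt zero_elt = zero_elt" by (simp add: zero_elt_def aff_add_def)
  then show "z \<in> Aff \<Longrightarrow> \<phi> zero_elt z = 0"
    using phi_add[OF zero_elt_in zero_elt_in, of z] by simp
  then show "z \<in> Aff \<Longrightarrow> \<phi> z zero_elt = 0"
    using phi_sym zero_elt_in by metis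
qed

lemma phi_expand_aux:
  assumes "finite S" and Z: "Z \<in> Aff"
  shows "{i. f i \<noteq> 0} \<subseteq> S \<Longrightarrow> (\<forall>i. f i \<in> gr i) \<Longrightarrow>
    \<phi> (f, c, d) Z = (\<Sum>i\<in>S. \<phi> (loop i (f i)) Z) + c * \<phi> K_elt Z + d * \<phi> d_elt Z"
  using assms(1)
proof (induction S arbitrary: f rule: finite_induct)
  case empty
  then have "(f, c, d) = aff_add (asc c K_elt) (asc d d_elt)"
    by (auto simp: aff_add_def aff_scale_def K_elt_def d_elt_def fun_eq_iff)
  then show ?case
    using phi_add[OF aff_scale_in[OF K_elt_in] aff_scale_in[OF d_elt_in] Z]
      phi_scale[OF K_elt_in Z] phi_scale[OF d_elt_in Z] by simp
next
  case (insert s S)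
  define f' where "f' = f(s := 0)"
  have f'_supp: "{i. f' i \<noteq> 0} \<subseteq> S" and f'_gr: "\<forall>i. f' i \<in> gr i"
    using insert.prems by (auto simp: f'_def)
  then have "(f', c, d) \<in> Aff"
    using insert.hyps(1) by (auto simp: mem_Aff_iff intro: finite_subset)
  moreover have "(f, c, d) = aff_add (loop s (f s)) (f', c, d)"
    by (simp add: aff_add_def loop_def f'_def fun_eq_iff)
  ultimately have "\<phi> (f, c, d) Z = \<phi> (loop s (f s)) Z + \<phi> (f', c, d) Z"
    using phi_add[OF loop_in _ Z] insert.prems(2) by auto
  also have "\<phi> (f', c, d) Z = (\<Sum>i\<in>S. \<phi> (loop i (f' i)) Z) + c * \<phi> K_elt Z + d * \<phi> d_elt Z"
    by (rule insert.IH[OF f'_supp f'_gr])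
  also have "(\<Sum>i\<in>S. \<phi> (loop i (f' i)) Z) = (\<Sum>i\<in>S. \<phi> (loop i (f i)) Z)"
    using insert.hyps(2) by (intro sum.cong) (auto simp: f'_def)
  finally show ?case using insert.hyps by (simp add: algebra_simps)
qed

lemma phi_expand:
  assumes "(f, c, d) \<in> Aff" and "Z \<in> Aff"
  shows "\<phi> (f, c, d) Z = (\<Sum>i\<in>{i. f i \<noteq> 0}. \<phi> (loop i (f i)) Z) + c * \<phi> K_elt Z + d * \<phi> d_elt Z"
  using assms by (intro phi_expand_aux) (auto simp: mem_Aff_iff)

lemma phi_K_abr: "u \<in> Aff \<Longrightarrow> w \<in> Aff \<Longrightarrow> \<phi> K_elt (abr u w) = 0"
  using phi_cyclic[OF _ _ K_elt_in, of u w] phi_sym[OF K_elt_in abr_in, of u w]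
  by (simp add: abr_K_left abr_K_right)

lemma phi_abr_d:
  assumes x: "x \<in> gr a" and y: "y \<in> gr b"
  shows "\<phi> (abr (loop a x) (loop b y)) d_elt = (of_int b - of_int a) * \<phi> (loop a x) (loop b y)"
  using phi_cyclic[OF loop_in[OF x] loop_in[OF y] d_elt_in] phi_sym[OF loop_in[OF x] loop_in[OF y]]
  by (simp add: abr_d_loop abr_loop_d phi_scale loop_in x y algebra_simps)

lemma phi_abr_loop_loop:
  assumes x: "x \<in> gr a" and y: "y \<in> gr b" and Z: "Z \<in> Aff"
  shows "\<phi> (abr (loop a x) (loop b y)) Z = \<phi> (loop (a + b) (br x y)) Z + omega a b x y * \<phi> K_elt Z"
    and "\<phi> Z (abr (loop a x) (loop b y)) = \<phi> Z (loop (a + b) (br x y)) + omega a b x y * \<phi> Z K_elt"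
proof -
  have xy: "loop (a + b) (br x y) \<in> Aff" by (rule loop_in, rule gr_br[OF x y])
  show 1: "\<phi> (abr (loop a x) (loop b y)) Z = \<phi> (loop (a + b) (br x y)) Z + omega a b x y * \<phi> K_elt Z"
    by (simp add: abr_loop_loop phi_add[OF xy aff_scale_in[OF K_elt_in] Z] phi_scale[OF K_elt_in Z])
  show "\<phi> Z (abr (loop a x) (loop b y)) = \<phi> Z (loop (a + b) (br x y)) + omega a b x y * \<phi> Z K_elt"
    using 1 phi_sym[OF Z] xy K_elt_in abr_in[OF loop_in[OF x] loop_in[OF y]] by simp
qed

lemma phi_K_loop:
  assumes v: "v \<in> gr k"
  shows "\<phi> K_elt (loop k v) = 0"
proof (cases "k = 0")
  case False
  then have "abr d_elt (loop k (scale (1 / of_int k) v)) = loop k v"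
    by (simp add: abr_d_loop loop_scale[symmetric] V.scale_scale)
  then show ?thesis using phi_K_abr[OF d_elt_in loop_in[OF gr_scale[OF v]]] by metis
next
  case True
  from v[unfolded True] have "\<phi> K_elt (loop 0 v) = 0"
  proof (induction rule: gr_bracket_induct)
    case (add a b)
    then show ?case by (simp add: loop_add phi_add_right[OF loop_in loop_in K_elt_in])
  next
    case (scale c a)
    then show ?case by (simp add: loop_scale phi_scale_right[OF loop_in K_elt_in])
  next
    case (bracket p x y)
    txt \<open>Reading the degree of \<open>x\<close> both as \<open>p\<close> and as \<open>p + n\<close> gives two relations whose
      difference is \<open>n B(x, y) \<phi>(K, K) = 0\<close>.\<close>
    have rel: "\<phi> K_elt (loop 0 (br x y)) + of_int p' * B x y * \<phi> K_elt K_elt = 0"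
      if "x \<in> gr p'" "y \<in> gr (- p')" for p'
      using phi_K_abr[OF loop_in loop_in, OF that] phi_abr_loop_loop(2)[OF that K_elt_in]
      by (simp add: omega_def)
    have e: "\<phi> K_elt (loop 0 (br x y)) + of_int p * B x y * \<phi> K_elt K_elt = 0"
      using rel[of p] bracket by simp
    have "of_nat n * (B x y * \<phi> K_elt K_elt)
        = (\<phi> K_elt (loop 0 (br x y)) + of_int (p + int n) * B x y * \<phi> K_elt K_elt)
          - (\<phi> K_elt (loop 0 (br x y)) + of_int p * B x y * \<phi> K_elt K_elt)"
      by (simp add: algebra_simps)
    also have "\<dots> = 0"
      using rel[of "p + int n"] e bracket gr_shift[of p 1] gr_shift[of "- p" "- 1"] by simp
    finally have "B x y * \<phi> K_elt K_elt = 0" using n_pos by simp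
    with e show ?case by (simp add: mult.assoc)
  qed (simp add: loop_zero K_elt_in)
  with True show ?thesis by simp
qed

definition kappa :: 'k where "kappa = \<phi> K_elt d_elt"

lemma phi_abr_loop_via_d:
  assumes x: "x \<in> gr a" and y: "y \<in> gr b" and z: "z \<in> gr c"
  shows "of_int (c - a - b) * \<phi> (abr (loop a x) (loop b y)) (loop c z)
     = \<phi> (loop (a + b + c) (br (br x y) z)) d_elt + omega (a + b) c (br x y) z * kappa"
proof -
  have xy: "br x y \<in> gr (a + b)" by (rule gr_br[OF x y])
  have "\<phi> (abr (loop a x) (loop b y)) (loop c z) = \<phi> (loop (a + b) (br x y)) (loop c z)"
    using phi_abr_loop_loop(1)[OF x y loop_in[OF z]] phi_K_loop[OF z] by simp
  moreover have "\<phi> (abr (loop (a + b) (br x y)) (loop c z)) d_elt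
      = (of_int c - of_int (a + b)) * \<phi> (loop (a + b) (br x y)) (loop c z)"
    by (rule phi_abr_d[OF xy z])
  ultimately show ?thesis
    using phi_abr_loop_loop(1)[OF xy z d_elt_in] by (simp add: kappa_def algebra_simps)
qed

text \<open>The cocycle identity for \<open>x t^(p + n k)\<close>, \<open>y t^(q - n k)\<close>, \<open>z t^l\<close>, which are homogeneous
  for every \<open>k\<close> because the grading is \<open>n\<close>-periodic.\<close>

lemma cyclic_identity_shifted:
  assumes x: "x \<in> gr p" and y: "y \<in> gr q" and z: "z \<in> gr l" and s: "s = p + q + l"
    and e: "e = (if s = 0 then B (br x y) z * kappa else 0)"
  shows "of_int ((q - int n*k) - l - (p + int n*k)) * of_int ((p + int n*k) - (q - int n*k) - l)
         * (\<phi> (loop s (br (br x y) z)) d_elt + omega (p + q) l (br x y) z * kappa)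
       + of_int (l - (p + int n*k) - (q - int n*k)) * of_int ((p + int n*k) - (q - int n*k) - l)
         * (\<phi> (loop s (br (br z x) y)) d_elt + e * of_int (l + (p + int n*k)))
       + of_int (l - (p + int n*k) - (q - int n*k)) * of_int ((q - int n*k) - l - (p + int n*k))
         * (\<phi> (loop s (br (br y z) x)) d_elt + e * of_int ((q - int n*k) + l)) = 0"
proof -
  define P where "P = p + int n * k"
  define Q where "Q = q - int n * k"
  have xP: "x \<in> gr P" using gr_shift[of p k] x by (simp add: P_def)
  have yQ: "y \<in> gr Q" using gr_shift[of q "- k"] y by (simp add: Q_def)
  have PQ: "P + Q = p + q" by (simp add: P_def Q_def)
  have s': "P + Q + l = s" "l + P + Q = s" "Q + l + P = s" using s PQ by simp_all
  have "of_int (l - P - Q) * \<phi> (abr (loop P x) (loop Q y)) (loop l z)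
      = \<phi> (loop s (br (br x y) z)) d_elt + omega (p + q) l (br x y) z * kappa"
    using phi_abr_loop_via_d[OF xP yQ z] PQ unfolding s' by simp
  moreover have "of_int (Q - l - P) * \<phi> (abr (loop l z) (loop P x)) (loop Q y)
      = \<phi> (loop s (br (br z x) y)) d_elt + e * of_int (l + P)"
  proof -
    have "omega (l + P) Q (br z x) y * kappa = e * of_int (l + P)"
      using s' by (simp add: omega_def e B_br_rotate)
    then show ?thesis
      using phi_abr_loop_via_d[OF z xP yQ] unfolding s' by (simp add: algebra_simps)
  qed
  moreover have "of_int (P - Q - l) * \<phi> (abr (loop Q y) (loop l z)) (loop P x)
      = \<phi> (loop s (br (br y z) x)) d_elt + e * of_int (Q + l)"
  proof -
    have "omega (Q + l) P (br y z) x * kappa = e * of_int (Q + l)"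
      using s' by (simp add: omega_def e B_br_rotate)
    then show ?thesis
      using phi_abr_loop_via_d[OF yQ z xP] unfolding s' by (simp add: algebra_simps)
  qed
  ultimately show ?thesis
    using weighted_cyclic_sum_eq_0[OF phi_cyclic[OF loop_in[OF xP] loop_in[OF yQ] loop_in[OF z]]]
    unfolding P_def Q_def by simp
qed

lemma phi_triple_d_formula:
  assumes "x \<in> gr p" and "y \<in> gr q" and "z \<in> gr l"
  shows "\<phi> (loop (p + q + l) (br (br x y) z)) d_elt + omega (p + q) l (br x y) z * kappa
     = of_int (l - p - q) * (if p + q + l = 0 then B (br x y) z * kappa else 0)"
  by (rule quadratic_family_eq_0_imp[where N = "int n", OF _ cyclic_identity_shifted[OF assms refl refl]])
    (use n_pos in simp)

text \<open>For \<open>p + q + l = 0\<close> a second degree shift \<open>(p, l) \<mapsto> (p - n, l + n)\<close> separates the two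
  unknowns.\<close>

lemma phi_triple_d_eq_0:
  assumes x: "x \<in> gr p" and y: "y \<in> gr q" and z: "z \<in> gr l"
  shows "\<phi> (loop (p + q + l) (br (br x y) z)) d_elt = 0"
    and "p + q + l = 0 \<Longrightarrow> B (br x y) z * kappa = 0"
proof -
  define w where "w = B (br x y) z * kappa"
  define F where "F = \<phi> (loop (p + q + l) (br (br x y) z)) d_elt"
  have "F = 0 \<and> (p + q + l = 0 \<longrightarrow> w = 0)"
  proof (cases "p + q + l = 0")
    case False
    with phi_triple_d_formula[OF x y z] show ?thesis by (simp add: F_def omega_def)
  next
    case True
    have x': "x \<in> gr (p - int n)" and z': "z \<in> gr (l + int n)"
      using gr_shift[of p "- 1"] gr_shift[of l 1] x z by simp_all
    have idx: "p - int n + q + (l + int n) = p + q + l" by simp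
    have "F + of_int (p - int n + q) * w = of_int (l + int n - (p - int n) - q) * w"
      using phi_triple_d_formula[OF x' y z'] True unfolding idx F_def[symmetric]
      by (simp add: omega_def mult.assoc flip: w_def)
    moreover have "F + of_int (p + q) * w = of_int (l - p - q) * w"
      using phi_triple_d_formula[OF x y z] True unfolding F_def[symmetric]
      by (simp add: omega_def mult.assoc flip: w_def)
    ultimately have "3 * of_nat n * w = 0"
      by (simp add: algebra_simps)
    then show ?thesis
      using n_pos \<open>F + of_int (p + q) * w = _\<close> by simp
  qed
  then show "\<phi> (loop (p + q + l) (br (br x y) z)) d_elt = 0"
    and "p + q + l = 0 \<Longrightarrow> B (br x y) z * kappa = 0"
    by (simp_all add: F_def w_def)
qed

lemma phi_loop_d: "v \<in> gr s \<Longrightarrow> \<phi> (loop s v) d_elt = 0"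
proof (induction rule: gr_triple_bracket_induct)
  case (add a b)
  then show ?case by (simp add: loop_add phi_add[OF loop_in loop_in d_elt_in])
next
  case (scale c a)
  then show ?case by (simp add: loop_scale phi_scale[OF loop_in d_elt_in])
next
  case (bracket p q x y z)
  then show ?case using phi_triple_d_eq_0(1) by fastforce
qed (simp add: loop_zero d_elt_in)

lemma kappa_eq_0:
  assumes x: "x \<in> gr i" and y: "y \<in> gr (- i)" and "B x y \<noteq> 0"
  shows "kappa = 0"
proof -
  from x have "B x y * kappa = 0"
  proof (induction rule: gr_bracket_induct)
    case (add a b)
    then show ?case by (auto simp: B_add distrib_right)
  next
    case (scale c a)
    then show ?case by (simp add: B_scale)
  next
    case (bracket p a b)
    then show ?case using phi_triple_d_eq_0(2)[OF _ _ y] by fastforce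
  qed simp
  with \<open>B x y \<noteq> 0\<close> show ?thesis by simp
qed

lemma omega_kappa:
  assumes "x \<in> gr a" and "y \<in> gr b"
  shows "omega a b x y * kappa = 0"
proof (cases "a + b = 0")
  case True
  then have "b = - a" by simp
  then have "y \<in> gr (- a)" using \<open>y \<in> gr b\<close> by simp
  then show ?thesis using kappa_eq_0[OF \<open>x \<in> gr a\<close>] by (cases "B x y = 0") (simp_all add: omega_def)
qed (simp add: omega_def)

lemma phi_loop_loop_neq:
  assumes x: "x \<in> gr a" and y: "y \<in> gr b" and "a \<noteq> b"
  shows "\<phi> (loop a x) (loop b y) = 0"
proof -
  have "(of_int b - of_int a) * \<phi> (loop a x) (loop b y) = \<phi> (abr (loop a x) (loop b y)) d_elt"
    by (rule phi_abr_d[OF x y, symmetric])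
  also have "\<dots> = 0"
    using phi_abr_loop_loop(1)[OF x y d_elt_in] phi_loop_d[OF gr_br[OF x y]] omega_kappa[OF x y]
    by (simp add: kappa_def)
  finally show ?thesis using \<open>a \<noteq> b\<close> by simp
qed

text \<open>For equal degrees, write \<open>x\<close> as a bracket and choose the degree of its first factor
  (which is only determined modulo \<open>n\<close>) to avoid \<open>0\<close> and \<open>a\<close>; then the cocycle identity only
  involves pairs of different degrees.\<close>

lemma phi_loop_loop_eq:
  assumes x: "x \<in> gr a" and y: "y \<in> gr a"
  shows "\<phi> (loop a x) (loop a y) = 0"
  using x
proof (induction rule: gr_bracket_induct)
  case (add u v)
  then show ?case by (simp add: loop_add phi_add[OF loop_in loop_in loop_in[OF y]])
next
  case (scale c u)
  then show ?case by (simp add: loop_scale phi_scale[OF loop_in loop_in[OF y]])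
next
  case (bracket p x\<^sub>1 x\<^sub>2)
  obtain p' where p': "p' mod int n = p mod int n" "p' \<noteq> 0" "p' \<noteq> a"
    using exists_congruent_avoiding[of "int n" p 0 a] n_pos by auto
  have "gr (a - p') = gr (a - p)"
    by (rule gr_cong_mod, rule mod_diff_cong[OF refl p'(1)])
  then have x\<^sub>1: "x\<^sub>1 \<in> gr p'" and x\<^sub>2: "x\<^sub>2 \<in> gr (a - p')"
    using bracket gr_cong_mod[OF p'(1)] by simp_all
  have "\<phi> (abr (loop a y) (loop p' x\<^sub>1)) (loop (a - p') x\<^sub>2) = 0"
    using phi_abr_loop_loop(1)[OF y x\<^sub>1 loop_in[OF x\<^sub>2]] phi_K_loop[OF x\<^sub>2]
      phi_loop_loop_neq[OF gr_br[OF y x\<^sub>1] x\<^sub>2] \<open>p' \<noteq> 0\<close> by simp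
  moreover have "\<phi> (abr (loop (a - p') x\<^sub>2) (loop a y)) (loop p' x\<^sub>1) = 0"
    using phi_abr_loop_loop(1)[OF x\<^sub>2 y loop_in[OF x\<^sub>1]] phi_K_loop[OF x\<^sub>1]
      phi_loop_loop_neq[OF gr_br[OF x\<^sub>2 y] x\<^sub>1] \<open>p' \<noteq> a\<close> by simp
  ultimately show ?case
    using phi_cyclic[OF loop_in[OF x\<^sub>1] loop_in[OF x\<^sub>2] loop_in[OF y]]
      phi_abr_loop_loop(1)[OF x\<^sub>1 x\<^sub>2 loop_in[OF y]] phi_K_loop[OF y] by simp
qed (simp add: loop_zero loop_in[OF y])

lemma phi_loop_loop: "x \<in> gr a \<Longrightarrow> y \<in> gr b \<Longrightarrow> \<phi> (loop a x) (loop b y) = 0"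
  using phi_loop_loop_neq phi_loop_loop_eq by (cases "a = b") auto

lemma phi_loop_left:
  assumes v: "v \<in> gr i" and Z: "Z \<in> Aff"
  shows "\<phi> (loop i v) Z = 0"
proof -
  obtain h c d where z: "Z = (h, c, d)" by (cases Z) auto
  have "\<phi> (loop i v) Z = \<phi> Z (loop i v)" by (rule phi_sym[OF loop_in[OF v] Z])
  also have "\<dots> = (\<Sum>l\<in>{l. h l \<noteq> 0}. \<phi> (loop l (h l)) (loop i v))
      + c * \<phi> K_elt (loop i v) + d * \<phi> d_elt (loop i v)"
    unfolding z by (rule phi_expand[OF Z[unfolded z] loop_in[OF v]])
  also have "\<dots> = 0"
    using Z phi_loop_loop[OF _ v] phi_K_loop[OF v] phi_loop_d[OF v] phi_sym[OF d_elt_in loop_in[OF v]]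
    by (simp add: z mem_Aff_iff)
  finally show ?thesis .
qed

lemma phi_K_left:
  assumes "kappa = 0" and "\<phi> K_elt K_elt = 0" and Z: "Z \<in> Aff"
  shows "\<phi> K_elt Z = 0"
proof -
  obtain h c d where z: "Z = (h, c, d)" by (cases Z) auto
  have "\<phi> K_elt Z = \<phi> Z K_elt" by (rule phi_sym[OF K_elt_in Z])
  also have "\<dots> = (\<Sum>l\<in>{l. h l \<noteq> 0}. \<phi> (loop l (h l)) K_elt) + c * \<phi> K_elt K_elt + d * \<phi> d_elt K_elt"
    unfolding z by (rule phi_expand[OF Z[unfolded z] K_elt_in])
  also have "\<dots> = 0"
    using Z assms(1,2) phi_loop_left[OF _ K_elt_in] phi_sym[OF d_elt_in K_elt_in]
    by (simp add: z mem_Aff_iff kappa_def)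
  finally show ?thesis .
qed

lemma phi_abr_left:
  assumes X: "X \<in> Aff" and Y: "Y \<in> Aff" and Z: "Z \<in> Aff"
  shows "\<phi> (abr X Y) Z = 0"
proof -
  obtain a c d b c' d' where xy: "X = (a, c, d)" "Y = (b, c', d')" by (cases X, cases Y) auto
  have a: "a i \<in> gr i" and b: "b i \<in> gr i" for i using X Y by (simp_all add: xy mem_Aff_iff)
  define m where "m = (\<Sum>i\<in>{i. a i \<noteq> 0}. of_int i * B (a i) (b (- i)))"
  obtain g where e: "abr X Y = (g, m, 0)" by (simp add: xy aff_bracket_def m_def)
  have "(g, m, 0) \<in> Aff" using abr_in[OF X Y] e by simp
  then have "\<phi> (abr X Y) Z = (\<Sum>i\<in>{i. g i \<noteq> 0}. \<phi> (loop i (g i)) Z) + m * \<phi> K_elt Z"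
    unfolding e using phi_expand[OF _ Z] by simp
  also have "\<dots> = m * \<phi> K_elt Z"
    using \<open>(g, m, 0) \<in> Aff\<close> phi_loop_left[OF _ Z] by (simp add: mem_Aff_iff)
  also have "\<dots> = 0"
  proof (cases "m = 0")
    case False
    then obtain i where nz: "of_int i * B (a i) (b (- i)) \<noteq> 0"
      unfolding m_def by (meson sum.not_neutral_contains_not_neutral)
    then have "kappa = 0" using kappa_eq_0[OF a b] by auto
    have "\<phi> K_elt (loop 0 (br (a i) (b (- i)))) + of_int i * B (a i) (b (- i)) * \<phi> K_elt K_elt = 0"
      using phi_K_abr[OF loop_in[OF a[of i]] loop_in[OF b[of "- i"]]] phi_abr_loop_loop(2)[OF a b K_elt_in, of i "- i"]
      by (simp add: omega_def)
    then have "\<phi> K_elt K_elt = 0"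
      using nz phi_K_loop[OF gr_br[OF a b, of i "- i"]] by simp
    with \<open>kappa = 0\<close> show ?thesis using phi_K_left[OF _ _ Z] by simp
  qed simp
  finally show ?thesis .
qed

end

lemma affine_cocycleI:
  assumes "simple_fd_lie_algebra scale br" and "diagram_automorphism scale br \<sigma> n"
    and "primitive_root \<epsilon> n" and "invariant_form scale br B"
    and "comm_2_cocycle (aff_carrier scale \<sigma> n \<epsilon>) aff_add (aff_scale scale) (aff_bracket scale br B) \<phi>"
  shows "affine_cocycle scale br \<sigma> n \<epsilon> B \<phi>"
proof -
  have "lie_algebra scale br" and "\<exists>x y. br x y \<noteq> 0"
    and "\<forall>J. lie_ideal scale br J \<longrightarrow> J = {0} \<or> J = UNIV"
    using assms(1) unfolding simple_fd_lie_algebra_def by blast+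
  moreover have "lie_automorphism scale br \<sigma>" and "n > 0" and "\<sigma> ^^ n = id"
    using assms(2) unfolding diagram_automorphism_def by blast+
  ultimately have "twisted_loop scale br \<sigma> n \<epsilon> B"
    using assms(3,4) unfolding twisted_loop_def twisted_loop_axioms_def
    by (auto simp: lie_algebra_def lie_automorphism_def primitive_root_def invariant_form_def)
  then show ?thesis
    using assms(5) by (simp add: affine_cocycle_def affine_cocycle_axioms_def)
qed

theorem theorem5p5:
  fixes scale :: "'k::field_char_0 \<Rightarrow> 'g::ab_group_add \<Rightarrow> 'g"
    and br :: "'g \<Rightarrow> 'g \<Rightarrow> 'g"
    and \<sigma> :: "'g \<Rightarrow> 'g" and n :: nat and \<epsilon> :: 'k
    and B :: "'g \<Rightarrow> 'g \<Rightarrow> 'k"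
    and \<phi> :: "('g, 'k) aff \<Rightarrow> ('g, 'k) aff \<Rightarrow> 'k"
  assumes "alg_closed TYPE('k)"
    and "simple_fd_lie_algebra scale br"
    and "diagram_automorphism scale br \<sigma> n"
    and "primitive_root \<epsilon> n"
    and "invariant_form scale br B"
    and "comm_2_cocycle (aff_carrier scale \<sigma> n \<epsilon>) aff_add (aff_scale scale) (aff_bracket scale br B) \<phi>"
  shows "\<forall>x\<in>aff_carrier scale \<sigma> n \<epsilon>. \<forall>y\<in>aff_carrier scale \<sigma> n \<epsilon>. \<forall>z\<in>aff_carrier scale \<sigma> n \<epsilon>.
           \<phi> (aff_bracket scale br B x y) z = 0"
proof -
  interpret affine_cocycle scale br \<sigma> n \<epsilon> B \<phi>
    using assms(2-6) by (rule affine_cocycleI)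
  show ?thesis using phi_abr_left by blast
qed

end
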